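(* For every positive integer $n$, the Alon-Tarsi number of the complete bipartite graph $K_{n,n}$ equals $1+\left\lceil \frac{n}{2}\right\rceil$.
   Context: For a graph $G$ with vertices ordered $x_1,\dots,x_N$ (treated as variables over a field of characteristic $0$), the graph polynomial is $P_G=\prod_{i<j,\ x_ix_j\in E(G)}(x_i-x_j)$. The Alon-Tarsi number of $G$ is $1+\min\max_k i_k$, where the minimum is over all monomials $x_1^{i_1}\cdots x_N^{i_N}$ with nonzero coefficient in $P_G$. *)

theory Defs
  imports Complex_Main "HOL-Library.Poly_Mapping"
begin

text \<open>Multivariate polynomials in variables x_0, x_1, ... over the rationals (a field of
  characteristic 0): monomials are finitely supported exponent vectors (nat =>0 nat),
  polynomials are finitely supported coefficient maps on monomials.\<close>

type_synonym mpoly = "(nat \<Rightarrow>\<^sub>0 nat) \<Rightarrow>\<^sub>0 rat"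

definition Var :: "nat \<Rightarrow> mpoly" where
  "Var i = Poly_Mapping.single (Poly_Mapping.single i 1) 1"

text \<open>A graph on vertex set {0..<N} (vertex i plays the role of x_{i+1}), given by a
  symmetric irreflexive adjacency relation E.\<close>

definition graph_poly :: "nat \<Rightarrow> (nat \<Rightarrow> nat \<Rightarrow> bool) \<Rightarrow> mpoly" where
  "graph_poly N E = (\<Prod>(i, j) \<in> {(i, j). i < j \<and> j < N \<and> E i j}. Var i - Var j)"

definition alon_tarsi_number :: "nat \<Rightarrow> (nat \<Rightarrow> nat \<Rightarrow> bool) \<Rightarrow> nat" where
  "alon_tarsi_number N E =
     1 + Min ((\<lambda>m. Max ((\<lambda>k. Poly_Mapping.lookup m k) ` {..<N}))
          ` {m :: nat \<Rightarrow>\<^sub>0 nat. Poly_Mapping.lookup (graph_poly N E) m \<noteq> 0})"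

definition Knn :: "nat \<Rightarrow> nat \<Rightarrow> nat \<Rightarrow> bool" where
  "Knn n i j \<longleftrightarrow> i < 2 * n \<and> j < 2 * n \<and> (i < n \<longleftrightarrow> \<not> j < n)"

end

theory Submission
  imports Defs
begin

text \<open>Expanding \<open>\<Prod>(x\<^sub>a - x\<^sub>b)\<close> over the edges of \<open>K\<^sub>n\<^sub>,\<^sub>n\<close>, with \<open>a\<close> in the
  left part and \<open>b\<close> in the right part, yields one signed monomial for every set \<open>B\<close> of edges
  that contribute their left end. The sign \<open>(-1)\<^bsup>|E - B|\<^esup>\<close> is determined by the degree of
  the monomial in the left variables, so equal monomials never cancel: a monomial has a nonzero
  coefficient iff it is the in-degree vector of an orientation of \<open>K\<^sub>n\<^sub>,\<^sub>n\<close>. Its \<open>n\<^sup>2\<close>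
  exponents are spread over \<open>2n\<close> variables, so one of them is at least \<open>\<lceil>n/2\<rceil>\<close>.
  Conversely, orienting the edge \<open>ab\<close> towards \<open>a\<close> iff \<open>(b - a) mod n < \<lceil>n/2\<rceil>\<close> gives
  every vertex in-degree at most \<open>\<lceil>n/2\<rceil>\<close>.\<close>

lemma prod_single:
  fixes f :: "'e \<Rightarrow> (nat \<Rightarrow>\<^sub>0 nat)" and c :: "'e \<Rightarrow> rat"
  assumes "finite A"
  shows "(\<Prod>e\<in>A. Poly_Mapping.single (f e) (c e)) =
    Poly_Mapping.single (\<Sum>e\<in>A. f e) (\<Prod>e\<in>A. c e)"
  using assms by (induction A rule: finite_induct) (auto simp: mult_single)

lemma sum_lookup_sum_single_one:
  fixes f :: "'e \<Rightarrow> nat"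
  assumes "finite A" "finite T"
  shows "(\<Sum>t\<in>T. Poly_Mapping.lookup (\<Sum>e\<in>A. Poly_Mapping.single (f e) 1) t) =
    card {e\<in>A. f e \<in> T}"
proof -
  have "(\<Sum>t\<in>T. Poly_Mapping.lookup (\<Sum>e\<in>A. Poly_Mapping.single (f e) 1) t) =
      (\<Sum>e\<in>A. \<Sum>t\<in>T. (1 when f e = t))"
    unfolding lookup_sum lookup_single by (rule sum.swap)
  also have "\<dots> = (\<Sum>e\<in>A. if f e \<in> T then 1 else 0)"
    using assms(2) by (simp add: when_def)
  also have "\<dots> = card {e\<in>A. f e \<in> T}"
    using assms(1) by (simp add: sum.inter_filter[symmetric])
  finally show ?thesis .
qed

lemma lookup_sum_single_one:
  fixes f :: "'e \<Rightarrow> nat"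
  assumes "finite A"
  shows "Poly_Mapping.lookup (\<Sum>e\<in>A. Poly_Mapping.single (f e) 1) t = card {e\<in>A. f e = t}"
  using sum_lookup_sum_single_one[OF assms, of "{t}" f] by simp

text \<open>The in-degree vector of the orientation of \<open>S\<close> pointing the edges of \<open>B\<close> towards
  their \<open>a\<close>-end and the others towards their \<open>b\<close>-end; as a monomial it is the term of
  \<open>\<Prod>(x\<^bsub>a e\<^esub> - x\<^bsub>b e\<^esub>)\<close> that picks \<open>x\<^bsub>a e\<^esub>\<close> exactly in the factors of \<open>B\<close>.\<close>

definition orientation_monom ::
    "('e \<Rightarrow> nat) \<Rightarrow> ('e \<Rightarrow> nat) \<Rightarrow> 'e set \<Rightarrow> 'e set \<Rightarrow> (nat \<Rightarrow>\<^sub>0 nat)" where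
  "orientation_monom a b S B = (\<Sum>e\<in>S. Poly_Mapping.single (if e \<in> B then a e else b e) 1)"

lemma orientation_monom_split:
  assumes "finite S" "B \<subseteq> S"
  shows "orientation_monom a b S B =
    (\<Sum>e\<in>B. Poly_Mapping.single (a e) 1) + (\<Sum>e\<in>S - B. Poly_Mapping.single (b e) 1)"
proof -
  have "orientation_monom a b S B = (\<Sum>e\<in>S.
      if e \<in> B then Poly_Mapping.single (a e) 1 else Poly_Mapping.single (b e) 1)"
    unfolding orientation_monom_def by (rule sum.cong) auto
  also have "\<dots> = (\<Sum>e\<in>S \<inter> B. Poly_Mapping.single (a e) 1) +
      (\<Sum>e\<in>S \<inter> - B. Poly_Mapping.single (b e) 1)"
    by (simp only: sum.If_cases[OF assms(1)] Collect_mem_eq)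
  finally show ?thesis
    using assms(2) by (simp add: Int_absorb1 Diff_eq)
qed

lemma lookup_orientation_monom:
  assumes "finite S" "B \<subseteq> S"
  shows "Poly_Mapping.lookup (orientation_monom a b S B) t =
    card {e\<in>B. a e = t} + card {e\<in>S - B. b e = t}"
proof -
  have "finite B" "finite (S - B)"
    using assms finite_subset by auto
  then show ?thesis
    unfolding orientation_monom_split[OF assms] lookup_add
    by (simp only: lookup_sum_single_one)
qed

lemma sum_lookup_orientation_monom:
  assumes "finite S" "finite T" "\<forall>e\<in>S. a e \<in> T \<and> b e \<in> T"
  shows "(\<Sum>t\<in>T. Poly_Mapping.lookup (orientation_monom a b S B) t) = card S"
proof -
  have "{e\<in>S. (if e \<in> B then a e else b e) \<in> T} = S"
    using assms(3) by auto
  then show ?thesis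
    unfolding orientation_monom_def sum_lookup_sum_single_one[OF assms(1,2)] by simp
qed

lemma sum_lookup_orientation_monom_bipartite:
  assumes "finite S" "finite T" "\<forall>e\<in>S. a e \<in> T \<and> b e \<notin> T" "B \<subseteq> S"
  shows "(\<Sum>t\<in>T. Poly_Mapping.lookup (orientation_monom a b S B) t) = card B"
proof -
  have "{e\<in>S. (if e \<in> B then a e else b e) \<in> T} = B"
    using assms(3,4) by auto
  then show ?thesis
    unfolding orientation_monom_def sum_lookup_sum_single_one[OF assms(1,2)] by simp
qed

lemma prod_Var_diff_eq_sum_orientations:
  assumes "finite S"
  shows "(\<Prod>e\<in>S. Var (a e) - Var (b e)) =
    (\<Sum>B\<in>Pow S. Poly_Mapping.single (orientation_monom a b S B) ((-1) ^ card (S - B)))"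
proof -
  have "(\<Prod>e\<in>S. Var (a e) - Var (b e)) = (\<Prod>e\<in>S. Var (a e) + (- Var (b e)))"
    by simp
  also have "\<dots> = (\<Sum>B\<in>Pow S. (\<Prod>e\<in>B. Var (a e)) * (\<Prod>e\<in>S - B. - Var (b e)))"
    by (rule prod_add[OF assms])
  also have "\<dots> = (\<Sum>B\<in>Pow S.
      Poly_Mapping.single (orientation_monom a b S B) ((-1) ^ card (S - B)))"
  proof (rule sum.cong[OF refl])
    fix B assume "B \<in> Pow S"
    then have B: "B \<subseteq> S" "finite B" "finite (S - B)"
      using assms finite_subset by auto
    show "(\<Prod>e\<in>B. Var (a e)) * (\<Prod>e\<in>S - B. - Var (b e)) =
        Poly_Mapping.single (orientation_monom a b S B) ((-1) ^ card (S - B))"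
      unfolding Var_def single_uminus[symmetric] prod_single[OF B(2)] prod_single[OF B(3)]
        orientation_monom_split[OF assms B(1)] mult_single
      by simp
  qed
  finally show ?thesis .
qed

text \<open>When every edge runs from \<open>T\<close> to its complement, \<open>|B|\<close> is the degree of the monomial in
  the variables of \<open>T\<close>, so all orientations producing a given monomial carry the same sign.\<close>

lemma lookup_prod_Var_diff_bipartite:
  assumes "finite S" "finite T" "\<forall>e\<in>S. a e \<in> T \<and> b e \<notin> T"
  shows "Poly_Mapping.lookup (\<Prod>e\<in>S. Var (a e) - Var (b e)) m =
    (-1) ^ (card S - (\<Sum>t\<in>T. Poly_Mapping.lookup m t)) *
      of_nat (card {B\<in>Pow S. orientation_monom a b S B = m})"
proof -
  let ?Bs = "{B\<in>Pow S. orientation_monom a b S B = m}"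
  have "Poly_Mapping.lookup (\<Prod>e\<in>S. Var (a e) - Var (b e)) m =
      (\<Sum>B\<in>Pow S. if orientation_monom a b S B = m then (-1) ^ card (S - B) else 0)"
    unfolding prod_Var_diff_eq_sum_orientations[OF assms(1)] lookup_sum lookup_single
    by (simp add: when_def)
  also have "\<dots> = (\<Sum>B\<in>?Bs. (-1) ^ card (S - B))"
    using assms(1) by (intro sum.inter_filter[symmetric]) simp
  also have "\<dots> = (\<Sum>B\<in>?Bs. (-1) ^ (card S - (\<Sum>t\<in>T. Poly_Mapping.lookup m t)))"
  proof (rule sum.cong[OF refl])
    fix B assume "B \<in> ?Bs"
    then have "B \<subseteq> S" "orientation_monom a b S B = m"
      by auto
    then have "card (S - B) = card S - (\<Sum>t\<in>T. Poly_Mapping.lookup m t)"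
      using sum_lookup_orientation_monom_bipartite[OF assms] assms(1)
      by (metis card_Diff_subset finite_subset)
    then show "(-1::rat) ^ card (S - B) = (-1) ^ (card S - (\<Sum>t\<in>T. Poly_Mapping.lookup m t))"
      by simp
  qed
  finally show ?thesis
    by simp
qed

lemma lookup_prod_Var_diff_bipartite_nonzero_iff:
  assumes "finite S" "finite T" "\<forall>e\<in>S. a e \<in> T \<and> b e \<notin> T"
  shows "Poly_Mapping.lookup (\<Prod>e\<in>S. Var (a e) - Var (b e)) m \<noteq> 0 \<longleftrightarrow>
    (\<exists>B\<subseteq>S. orientation_monom a b S B = m)"
proof -
  have "finite {B\<in>Pow S. orientation_monom a b S B = m}"
    using assms(1) by simp
  then show ?thesis
    unfolding lookup_prod_Var_diff_bipartite[OF assms] by auto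
qed

lemma nat_ceiling_half: "nat \<lceil>real n / 2\<rceil> = (n + 1) div 2"
proof -
  have "\<lceil>real n / 2\<rceil> = int ((n + 1) div 2)"
    by (rule ceiling_unique) linarith+
  then show ?thesis
    by simp
qed

lemma alon_tarsi_number_eqI:
  assumes "0 < N"
    and lower: "\<And>m. Poly_Mapping.lookup (graph_poly N E) m \<noteq> 0 \<Longrightarrow>
      \<exists>t<N. k \<le> Poly_Mapping.lookup m t"
    and witness: "Poly_Mapping.lookup (graph_poly N E) m\<^sub>0 \<noteq> 0"
      "\<And>t. t < N \<Longrightarrow> Poly_Mapping.lookup m\<^sub>0 t \<le> k"
  shows "alon_tarsi_number N E = 1 + k"
proof -
  let ?max_exp = "\<lambda>m. Max ((\<lambda>t. Poly_Mapping.lookup m t) ` {..<N})"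
  let ?M = "{m. Poly_Mapping.lookup (graph_poly N E) m \<noteq> 0}"
  have "?M = Poly_Mapping.keys (graph_poly N E)"
    by (auto simp: in_keys_iff)
  then have "finite (?max_exp ` ?M)"
    by simp
  moreover have "k \<le> ?max_exp m" if "m \<in> ?M" for m
    using lower[of m] that by (auto intro: Max_ge_iff[THEN iffD2])
  moreover have "?max_exp m\<^sub>0 = k"
    using witness \<open>0 < N\<close> lower[OF witness(1)]
    by (intro antisym Max.boundedI) (auto intro: Max_ge_iff[THEN iffD2])
  ultimately have "Min (?max_exp ` ?M) = k"
    using witness(1) by (intro Min_eqI) force+
  then show ?thesis
    unfolding alon_tarsi_number_def by simp
qed

lemma graph_poly_Knn:
  "graph_poly (2 * n) (Knn n) = (\<Prod>e\<in>{..<n} \<times> {n..<2 * n}. Var (fst e) - Var (snd e))"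
proof -
  have "{(i, j). i < j \<and> j < 2 * n \<and> Knn n i j} = {..<n} \<times> {n..<2 * n}"
    unfolding Knn_def by auto
  then show ?thesis
    unfolding graph_poly_def by (simp add: case_prod_beta')
qed

lemma lookup_graph_poly_Knn_nonzero_iff:
  "Poly_Mapping.lookup (graph_poly (2 * n) (Knn n)) m \<noteq> 0 \<longleftrightarrow>
    (\<exists>B\<subseteq>{..<n} \<times> {n..<2 * n}. orientation_monom fst snd ({..<n} \<times> {n..<2 * n}) B = m)"
  unfolding graph_poly_Knn
  by (rule lookup_prod_Var_diff_bipartite_nonzero_iff[where T = "{..<n}"]) auto

lemma Knn_exponent_lower_bound:
  assumes "0 < n" "Poly_Mapping.lookup (graph_poly (2 * n) (Knn n)) m \<noteq> 0"
  shows "\<exists>t<2 * n. n \<le> 2 * Poly_Mapping.lookup m t"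
proof (rule ccontr)
  assume "\<not> ?thesis"
  then have small: "2 * Poly_Mapping.lookup m t < n" if "t < 2 * n" for t
    using that by fastforce
  obtain B where "orientation_monom fst snd ({..<n} \<times> {n..<2 * n}) B = m"
    using assms(2) lookup_graph_poly_Knn_nonzero_iff by blast
  then have "2 * (n * n) = 2 * (\<Sum>t<2 * n. Poly_Mapping.lookup m t)"
    using sum_lookup_orientation_monom[of "{..<n} \<times> {n..<2 * n}" "{..<2 * n}" fst snd B]
    by auto
  also have "\<dots> = (\<Sum>t<2 * n. 2 * Poly_Mapping.lookup m t)"
    by (rule sum_distrib_left)
  also have "\<dots> < (\<Sum>t<2 * n. n)"
    using small \<open>0 < n\<close> by (intro sum_strict_mono) (auto simp: lessThan_empty_iff)
  also have "\<dots> = 2 * (n * n)"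
    by simp
  finally show False
    by simp
qed

lemma mod_eq_imp_eq_int:
  fixes x y n :: int
  assumes "x mod n = y mod n" "\<bar>x - y\<bar> < n"
  shows "x = y"
proof -
  have "n dvd x - y"
    using assms(1) by (simp add: mod_eq_dvd_iff)
  show ?thesis
  proof (rule ccontr)
    assume "x \<noteq> y"
    then have "\<bar>n\<bar> \<le> \<bar>x - y\<bar>"
      using dvd_imp_le_int \<open>n dvd x - y\<close> by simp
    then show False
      using assms(2) by linarith
  qed
qed

text \<open>The residues \<open>(b - a) mod n\<close> of the edges at a fixed vertex are distinct, which
  bounds the in-degrees on the left by \<open>k\<close> and on the right by \<open>n - k\<close>.\<close>

definition circulant_orientation :: "nat \<Rightarrow> nat \<Rightarrow> (nat \<times> nat) set" where
  "circulant_orientation n k =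
    {(a, b) \<in> {..<n} \<times> {n..<2 * n}. (int b - int a) mod int n < int k}"

lemma circulant_orientation_subset:
  "circulant_orientation n k \<subseteq> {..<n} \<times> {n..<2 * n}"
  unfolding circulant_orientation_def by auto

lemma card_circulant_orientation_left:
  "card {e \<in> circulant_orientation n k. fst e = a} \<le> k"
proof -
  let ?A = "{e \<in> circulant_orientation n k. fst e = a}"
  let ?r = "\<lambda>e. (int (snd e) - int (fst e)) mod int n"
  have "inj_on ?r ?A"
  proof (rule inj_onI)
    fix e e' assume e: "e \<in> ?A" and e': "e' \<in> ?A" and "?r e = ?r e'"
    have "int (snd e) - int a = int (snd e') - int a"
    proof (rule mod_eq_imp_eq_int)
      show "(int (snd e) - int a) mod int n = (int (snd e') - int a) mod int n"
        using e e' \<open>?r e = ?r e'\<close> by simp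
      show "\<bar>(int (snd e) - int a) - (int (snd e') - int a)\<bar> < int n"
        using e e' unfolding circulant_orientation_def by auto
    qed
    then show "e = e'"
      using e e' by (simp add: prod_eq_iff)
  qed
  moreover have "?r ` ?A \<subseteq> {0..<int k}"
    unfolding circulant_orientation_def by auto
  ultimately have "card ?A \<le> card {0..<int k}"
    by (rule card_inj_on_le) simp
  then show ?thesis
    by simp
qed

lemma card_circulant_orientation_right:
  "card {e \<in> {..<n} \<times> {n..<2 * n} - circulant_orientation n k. snd e = b} \<le> n - k"
proof -
  let ?A = "{e \<in> {..<n} \<times> {n..<2 * n} - circulant_orientation n k. snd e = b}"
  let ?r = "\<lambda>e. (int (snd e) - int (fst e)) mod int n"
  have "inj_on ?r ?A"
  proof (rule inj_onI)
    fix e e' assume e: "e \<in> ?A" and e': "e' \<in> ?A" and "?r e = ?r e'"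
    have "int b - int (fst e) = int b - int (fst e')"
    proof (rule mod_eq_imp_eq_int)
      show "(int b - int (fst e)) mod int n = (int b - int (fst e')) mod int n"
        using e e' \<open>?r e = ?r e'\<close> by simp
      show "\<bar>(int b - int (fst e)) - (int b - int (fst e'))\<bar> < int n"
        using e e' by auto
    qed
    then show "e = e'"
      using e e' by (simp add: prod_eq_iff)
  qed
  moreover have "?r ` ?A \<subseteq> {int k..<int n}"
    unfolding circulant_orientation_def by auto
  ultimately have "card ?A \<le> card {int k..<int n}"
    by (rule card_inj_on_le) simp
  then show ?thesis
    by simp
qed

lemma lookup_circulant_orientation_monom:
  fixes n k t :: nat
  defines "S \<equiv> {..<n} \<times> {n..<2 * n}"
  shows "Poly_Mapping.lookup (orientation_monom fst snd S (circulant_orientation n k)) t \<le>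
    max k (n - k)"
proof -
  let ?C = "circulant_orientation n k"
  have lookup: "Poly_Mapping.lookup (orientation_monom fst snd S ?C) t =
      card {e \<in> ?C. fst e = t} + card {e \<in> S - ?C. snd e = t}"
    using circulant_orientation_subset unfolding S_def by (intro lookup_orientation_monom) auto
  show ?thesis
  proof (cases "t < n")
    case True
    then have no_right: "{e \<in> S - ?C. snd e = t} = {}"
      unfolding S_def by auto
    show ?thesis
      unfolding lookup no_right using card_circulant_orientation_left[of n k t] by simp
  next
    case False
    then have no_left: "{e \<in> ?C. fst e = t} = {}"
      unfolding circulant_orientation_def by auto
    show ?thesis
      unfolding lookup no_left
      using card_circulant_orientation_right[of n k t, folded S_def] by simp
  qed
qed

theorem mainTheorem3:
  fixes n :: nat
  assumes "n \<ge> 1"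
  shows "alon_tarsi_number (2 * n) (Knn n) = 1 + nat \<lceil>real n / 2\<rceil>"
  unfolding nat_ceiling_half
proof (rule alon_tarsi_number_eqI)
  let ?m = "orientation_monom fst snd ({..<n} \<times> {n..<2 * n})
    (circulant_orientation n ((n + 1) div 2))"
  show "0 < 2 * n"
    using assms by simp
  show "\<exists>t<2 * n. (n + 1) div 2 \<le> Poly_Mapping.lookup m t"
    if "Poly_Mapping.lookup (graph_poly (2 * n) (Knn n)) m \<noteq> 0" for m
    using Knn_exponent_lower_bound[OF _ that] assms by fastforce
  show "Poly_Mapping.lookup (graph_poly (2 * n) (Knn n)) ?m \<noteq> 0"
    unfolding lookup_graph_poly_Knn_nonzero_iff using circulant_orientation_subset by blast
  show "Poly_Mapping.lookup ?m t \<le> (n + 1) div 2" for t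
    using lookup_circulant_orientation_monom[of n "(n + 1) div 2" t] by simp
qed

end
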